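(* Let $X$ be a string of length $n$, let $k\ge 2$ be an integer, and let $b$ be the number of $k$-breaks in $X$. Then $\tfrac13 b \le \mathrm{BP}_k(X)\le b+3$.
   Context: For a string $Z$, $\mathrm{per}(Z)$ is its smallest period, i.e. the smallest $q\ge1$ with $Z[i]=Z[i+q]$ for all $0\le i<|Z|-q$. $Z$ is $q$-periodic if $\mathrm{per}(Z)\le q$. $X[i..j)$ denotes the substring $X[i]X[i+1]\cdots X[j-1]$. A position $i\in\{0,1,\dots,n-3k\}$ is a $k$-break in $X$ if $i$ is a multiple of $k$ and $\mathrm{per}(X[i..i+3k))>k$. The $k$-block periodicity $\mathrm{BP}_k(X)$ is the smallest $L$ such that $X=X_1\cdots X_L$ with every $X_\ell$ $k$-periodic. *)

theory Defs
  imports Main "HOL.Real"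
begin

definition substr :: "'a list \<Rightarrow> nat \<Rightarrow> nat \<Rightarrow> 'a list" where
  "substr X i j = take (j - i) (drop i X)"

definition is_period :: "'a list \<Rightarrow> nat \<Rightarrow> bool" where
  "is_period Z q \<longleftrightarrow> (\<forall>i. i + q < length Z \<longrightarrow> Z ! i = Z ! (i + q))"

definition per :: "'a list \<Rightarrow> nat" where
  "per Z = (LEAST q. 1 \<le> q \<and> is_period Z q)"

definition periodic :: "nat \<Rightarrow> 'a list \<Rightarrow> bool" where
  "periodic q Z \<longleftrightarrow> per Z \<le> q"

definition breaks :: "nat \<Rightarrow> 'a list \<Rightarrow> nat set" where
  "breaks k X = {i. i + 3 * k \<le> length X \<and> k dvd i \<and> per (substr X i (i + 3 * k)) > k}"

definition BP :: "nat \<Rightarrow> 'a list \<Rightarrow> nat" where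
  "BP k X = (LEAST L. \<exists>Xs. length Xs = L \<and> concat Xs = X \<and> (\<forall>Y\<in>set Xs. periodic k Y))"

end

theory Submission
  imports Defs
begin

text \<open>
  Lower bound: a window \<open>X[i..i+3k)\<close> lying inside a \<open>k\<close>-periodic block is itself
  \<open>k\<close>-periodic, so every \<open>k\<close>-break window straddles a block boundary, and a boundary is
  straddled by at most three windows starting at multiples of \<open>k\<close>.

  Upper bound: sweep the windows at \<open>0, k, 2k, \<dots>\<close> from left to right, keeping one open
  \<open>k\<close>-periodic block.  Consecutive non-break windows overlap in \<open>2k\<close> characters, enough
  for two periods \<open>p, q \<le> k\<close> to propagate, so a non-break window extends the open block;
  a break closes it, at the cost of one block.  The unswept tail is shorter than \<open>3k\<close>
  and costs at most three more blocks.
\<close>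

definition has_period_on :: "'a list \<Rightarrow> nat \<Rightarrow> nat \<Rightarrow> nat \<Rightarrow> bool" where
  "has_period_on X s e q \<longleftrightarrow> (\<forall>i. s \<le> i \<longrightarrow> i + q < e \<longrightarrow> X ! i = X ! (i + q))"

lemma length_substr: "length (substr X s e) = min e (length X) - s"
  by (simp add: substr_def)

lemma nth_substr: "j < length (substr X s e) \<Longrightarrow> substr X s e ! j = X ! (s + j)"
  by (simp add: substr_def, subst nth_drop, auto)

lemma substr_append_drop: "s \<le> e \<Longrightarrow> substr X s e @ drop e X = drop s X"
  unfolding substr_def by (metis append_take_drop_id drop_drop le_add_diff_inverse2)

lemma take_append_substr: "s \<le> e \<Longrightarrow> take s X @ substr X s e = take e X"
  unfolding substr_def by (metis le_add_diff_inverse take_add)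

lemma is_period_substr_iff:
  "is_period (substr X s e) q \<longleftrightarrow> has_period_on X s (min e (length X)) q"
proof
  assume per: "is_period (substr X s e) q"
  show "has_period_on X s (min e (length X)) q"
    unfolding has_period_on_def
  proof (intro allI impI)
    fix i assume "s \<le> i" "i + q < min e (length X)"
    then have j: "i - s + q < length (substr X s e)" by (simp add: length_substr less_diff_conv)
    then have "substr X s e ! (i - s) = substr X s e ! (i - s + q)"
      using per unfolding is_period_def by blast
    then show "X ! i = X ! (i + q)" using j \<open>s \<le> i\<close> by (simp add: nth_substr)
  qed
next
  assume per: "has_period_on X s (min e (length X)) q"
  show "is_period (substr X s e) q"
    unfolding is_period_def
  proof (intro allI impI)
    fix j assume j: "j + q < length (substr X s e)"
    then have "s + j + q < min e (length X)" by (simp add: length_substr min_def split: if_splits)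
    then have "X ! (s + j) = X ! (s + j + q)" using per by (simp add: has_period_on_def)
    then show "substr X s e ! j = substr X s e ! (j + q)" using j by (simp add: nth_substr add.assoc)
  qed
qed

text \<open>The overlap \<open>[t, e)\<close> has length at least \<open>p + q\<close>, so the period \<open>q\<close> propagates
  leftwards: \<open>X!i = X!(i+p) = X!(i+p+q) = X!(i+q)\<close>.\<close>
lemma has_period_on_extend_left:
  assumes P: "has_period_on X s e p" and Q: "has_period_on X t f q"
    and "0 < p" "s \<le> t" "t + p + q \<le> e" "e \<le> f"
  shows "has_period_on X s f q"
  unfolding has_period_on_def
proof (intro allI impI)
  fix i assume "s \<le> i" "i + q < f"
  then show "X ! i = X ! (i + q)"
  proof (induction "f - i" arbitrary: i rule: less_induct)
    case (less i)
    show ?case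
    proof (cases "t \<le> i")
      case True
      then show ?thesis using Q less.prems by (simp add: has_period_on_def)
    next
      case False
      then have "i + p + q < e" using assms by linarith
      then have "X ! i = X ! (i + p)" and "X ! (i + q) = X ! (i + q + p)"
        using P less.prems by (auto simp: has_period_on_def)
      moreover have "X ! (i + p) = X ! (i + p + q)"
        using less.hyps[of "i + p"] less.prems \<open>i + p + q < e\<close> \<open>0 < p\<close> assms by simp
      ultimately show ?thesis by (simp add: ac_simps)
    qed
  qed
qed

lemma periodic_iff: "periodic k Z \<longleftrightarrow> (\<exists>q. 1 \<le> q \<and> q \<le> k \<and> is_period Z q)"
proof -
  have "1 \<le> Suc (length Z) \<and> is_period Z (Suc (length Z))" by (simp add: is_period_def)
  then have "1 \<le> per Z \<and> is_period Z (per Z)" unfolding per_def by (rule LeastI)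
  then show ?thesis unfolding periodic_def per_def by (auto intro: Least_le order_trans)
qed

lemma periodic_short: "0 < k \<Longrightarrow> length Z \<le> k \<Longrightarrow> periodic k Z"
  unfolding periodic_iff is_period_def by (intro exI[of _ k]) auto

lemma periodic_substr_iff:
  "periodic k (substr X s e) \<longleftrightarrow> (\<exists>q. 1 \<le> q \<and> q \<le> k \<and> has_period_on X s (min e (length X)) q)"
  by (simp add: periodic_iff is_period_substr_iff)

lemma periodic_substr_mono:
  "periodic k (substr X s e) \<Longrightarrow> s \<le> s' \<Longrightarrow> e' \<le> e \<Longrightarrow> periodic k (substr X s' e')"
  unfolding periodic_substr_iff has_period_on_def by fastforce

lemma periodic_substr: "periodic k X \<Longrightarrow> periodic k (substr X s e)"
  unfolding periodic_substr_iff by (fastforce simp: periodic_iff is_period_def has_period_on_def)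

lemma periodic_substr_merge:
  assumes "periodic k (substr X s e)" "periodic k (substr X t f)"
    and "s \<le> t" "t + 2 * k \<le> e" "e \<le> f" "e \<le> length X"
  shows "periodic k (substr X s f)"
proof -
  obtain p where p: "1 \<le> p" "p \<le> k" "has_period_on X s e p"
    using assms(1,6) by (auto simp: periodic_substr_iff min_absorb1)
  obtain q where q: "1 \<le> q" "q \<le> k" "has_period_on X t (min f (length X)) q"
    using assms(2) by (auto simp: periodic_substr_iff)
  have "has_period_on X s (min f (length X)) q"
    using has_period_on_extend_left[OF p(3) q(3)] p q assms(3-6) by simp
  then show ?thesis using q unfolding periodic_substr_iff by blast
qed

lemma card_multiples_straddling_le_3:
  "card {i::nat. k dvd i \<and> i < s \<and> s < i + 3 * k} \<le> 3"
proof (cases "k = 0")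
  case False
  let ?a = "(s - 1) div k"
  have "{i. k dvd i \<and> i < s \<and> s < i + 3 * k} \<subseteq> (\<lambda>t. t * k) ` {?a - 2 .. ?a}"
  proof
    fix i assume "i \<in> {i. k dvd i \<and> i < s \<and> s < i + 3 * k}"
    then obtain t where t: "i = t * k" "t * k < s" "s < t * k + 3 * k"
      by (auto elim!: dvdE simp: mult.commute)
    have "t * k \<le> s - 1" using t by linarith
    then have "t \<le> ?a" using False by (metis div_le_mono nonzero_mult_div_cancel_right)
    moreover have "s - 1 < (t + 3) * k" using t by (simp add: algebra_simps)
    then have "?a < t + 3" using False by (simp add: less_mult_imp_div_less)
    ultimately show "i \<in> (\<lambda>t. t * k) ` {?a - 2 .. ?a}" using t by auto
  qed
  then have "card {i. k dvd i \<and> i < s \<and> s < i + 3 * k} \<le> card ((\<lambda>t. t * k) ` {?a - 2 .. ?a})"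
    by (intro card_mono) auto
  also have "\<dots> \<le> card {?a - 2 .. ?a}" by (rule card_image_le) auto
  also have "\<dots> \<le> 3" by simp
  finally show ?thesis .
next
  case True
  then have "{i. k dvd i \<and> i < s \<and> s < i + 3 * k} = {}" by auto
  then show ?thesis by (simp only: card.empty zero_le)
qed

lemma finite_breaks: "finite (breaks k X)"
  by (rule finite_subset[of _ "{..length X}"]) (auto simp: breaks_def)

lemma breaks_append_periodic:
  assumes "periodic k Y"
  shows "breaks k (A @ Y) \<subseteq> breaks k A \<union> {i. k dvd i \<and> i < length A \<and> length A < i + 3 * k}"
proof
  fix i assume "i \<in> breaks k (A @ Y)"
  then have i: "i + 3 * k \<le> length (A @ Y)" "k dvd i" "\<not> periodic k (substr (A @ Y) i (i + 3 * k))"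
    by (auto simp: breaks_def periodic_def)
  consider "i + 3 * k \<le> length A" | "length A \<le> i" | "i < length A \<and> length A < i + 3 * k"
    by linarith
  then show "i \<in> breaks k A \<union> {i. k dvd i \<and> i < length A \<and> length A < i + 3 * k}"
  proof cases
    case 1
    then have "substr (A @ Y) i (i + 3 * k) = substr A i (i + 3 * k)" by (simp add: substr_def)
    then show ?thesis using 1 i by (auto simp: breaks_def periodic_def)
  next
    case 2
    then have "substr (A @ Y) i (i + 3 * k) = substr Y (i - length A) (i - length A + 3 * k)"
      by (simp add: substr_def)
    then show ?thesis using i(3) periodic_substr[OF assms] by simp
  qed (use i in auto)
qed

lemma card_breaks_concat_le:
  assumes "0 < k" "\<forall>Y\<in>set Xs. periodic k Y"
  shows "card (breaks k (concat Xs)) \<le> 3 * length Xs"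
  using assms(2)
proof (induction Xs rule: rev_induct)
  case Nil
  then show ?case using assms(1) by (simp add: breaks_def)
next
  case (snoc Y Xs)
  let ?A = "concat Xs"
  have "card (breaks k (?A @ Y))
      \<le> card (breaks k ?A \<union> {i. k dvd i \<and> i < length ?A \<and> length ?A < i + 3 * k})"
    using breaks_append_periodic snoc.prems by (intro card_mono) (auto simp: finite_breaks)
  also have "\<dots> \<le> card (breaks k ?A) + 3"
    by (rule le_trans[OF card_Un_le]) (simp add: card_multiples_straddling_le_3)
  also have "\<dots> \<le> 3 * length (Xs @ [Y])" using snoc by simp
  finally show ?case by simp
qed

lemma BP_le: "concat Xs = X \<Longrightarrow> \<forall>Y\<in>set Xs. periodic k Y \<Longrightarrow> BP k X \<le> length Xs"
  unfolding BP_def by (rule Least_le) blast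

lemma BP_cover:
  assumes "0 < k"
  obtains Xs where "length Xs = BP k X" "concat Xs = X" "\<forall>Y\<in>set Xs. periodic k Y"
proof -
  have singletons: "concat (map (\<lambda>x. [x]) X) = X \<and> (\<forall>Y\<in>set (map (\<lambda>x. [x]) X). periodic k Y)"
    using assms by (auto intro!: periodic_short)
  have "\<exists>Xs. length Xs = BP k X \<and> concat Xs = X \<and> (\<forall>Y\<in>set Xs. periodic k Y)"
    unfolding BP_def by (rule LeastI_ex) (use singletons in blast)
  then show ?thesis using that by blast
qed

lemma BP_append_le:
  assumes "0 < k" shows "BP k (A @ B) \<le> BP k A + BP k B"
proof -
  obtain As where "length As = BP k A" "concat As = A" "\<forall>Y\<in>set As. periodic k Y"
    using BP_cover[OF assms] .
  moreover obtain Bs where "length Bs = BP k B" "concat Bs = B" "\<forall>Y\<in>set Bs. periodic k Y"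
    using BP_cover[OF assms] .
  ultimately show ?thesis using BP_le[of "As @ Bs" "A @ B" k] by auto
qed

lemma BP_le_of_length: "0 < k \<Longrightarrow> length Y \<le> j * k \<Longrightarrow> BP k Y \<le> j"
proof (induction j arbitrary: Y)
  case 0
  then show ?case using BP_le[of "[]" Y k] by simp
next
  case (Suc j)
  have "periodic k (take k Y)" by (rule periodic_short[OF Suc.prems(1)]) simp
  then have "BP k (take k Y) \<le> 1" using BP_le[of "[take k Y]" "take k Y" k] by simp
  moreover have "length (drop k Y) \<le> j * k" using Suc.prems(2) by simp
  then have "BP k (drop k Y) \<le> j" using Suc.IH Suc.prems(1) by blast
  ultimately show ?case using BP_append_le[OF Suc.prems(1), of "take k Y" "drop k Y"] by simp
qed

lemma BP_lower:
  assumes "0 < k" shows "card (breaks k X) \<le> 3 * BP k X"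
proof -
  obtain Xs where "length Xs = BP k X" "concat Xs = X" "\<forall>Y\<in>set Xs. periodic k Y"
    using BP_cover[OF assms] .
  then show ?thesis using card_breaks_concat_le[OF assms, of Xs] by simp
qed

lemma card_breaks_lessThan_Suc:
  assumes "0 < k"
  shows "card (breaks k X \<inter> {..<Suc m * k})
    = card (breaks k X \<inter> {..<m * k}) + (if m * k \<in> breaks k X then 1 else 0)"
proof -
  have "breaks k X \<inter> {..<Suc m * k} = breaks k X \<inter> {..<m * k} \<union> (breaks k X \<inter> {m * k})"
  proof (intro equalityI subsetI)
    fix i assume i: "i \<in> breaks k X \<inter> {..<Suc m * k}"
    then have "k dvd i" by (simp add: breaks_def)
    then obtain c where c: "i = c * k" by (metis dvdE mult.commute)
    then have "c * k < Suc m * k" using i by simp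
    then have "c < Suc m" by (metis mult_less_cancel2)
    then show "i \<in> breaks k X \<inter> {..<m * k} \<union> (breaks k X \<inter> {m * k})"
      using i c assms by (auto simp: less_Suc_eq)
  qed (use assms in auto)
  then show ?thesis by (simp add: finite_breaks)
qed

lemma breaks_subset_lessThan:
  assumes "0 < k" shows "breaks k X \<subseteq> {..<(length X div k - 2) * k}"
proof
  fix i assume "i \<in> breaks k X"
  then have "k dvd i" "i + 3 * k \<le> length X" by (simp_all add: breaks_def)
  then obtain c where c: "i = c * k" "(c + 3) * k \<le> length X"
    by (metis dvdE mult.commute add_mult_distrib)
  then have "c + 3 \<le> length X div k" using assms by (simp add: less_eq_div_iff_mult_less_eq)
  then show "i \<in> {..<(length X div k - 2) * k}" using c assms by simp
qed

text \<open>\<open>Ps\<close> covers \<open>X[0..s)\<close>; either no block is open (\<open>s = m k\<close>), or the open block is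
  \<open>X[s..(m+2)k)\<close>, which already contains the first two thirds of the next window.\<close>
definition sweep_invariant :: "nat \<Rightarrow> 'a list \<Rightarrow> nat \<Rightarrow> 'a list list \<Rightarrow> nat \<Rightarrow> bool" where
  "sweep_invariant k X m Ps s \<longleftrightarrow>
     concat Ps = take s X \<and> (\<forall>Y\<in>set Ps. periodic k Y) \<and>
     length Ps \<le> card (breaks k X \<inter> {..<m * k}) \<and> s \<le> m * k \<and>
     (s = m * k \<or> periodic k (substr X s ((m + 2) * k)))"

lemma sweep_invariant_Suc:
  assumes inv: "sweep_invariant k X m Ps s" and k: "0 < k" and len: "m * k + 3 * k \<le> length X"
  shows "\<exists>Ps' s'. sweep_invariant k X (Suc m) Ps' s'"
proof -
  have cover: "concat Ps = take s X" and pieces: "\<forall>Y\<in>set Ps. periodic k Y"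
    and count: "length Ps \<le> card (breaks k X \<inter> {..<m * k})" and s_le: "s \<le> m * k"
    and open_block: "s \<noteq> m * k \<Longrightarrow> periodic k (substr X s ((m + 2) * k))"
    using inv by (auto simp: sweep_invariant_def)
  have count_Suc: "card (breaks k X \<inter> {..<Suc m * k})
      = card (breaks k X \<inter> {..<m * k}) + (if m * k \<in> breaks k X then 1 else 0)"
    by (rule card_breaks_lessThan_Suc[OF k])
  have end_eq: "(Suc m + 2) * k = m * k + 3 * k" by (simp add: algebra_simps)
  show ?thesis
  proof (cases "m * k \<in> breaks k X")
    case True
    let ?Y = "substr X s (Suc m * k)"
    have "periodic k ?Y"
    proof (cases "s = m * k")
      case True
      then show ?thesis using k by (intro periodic_short) (auto simp: length_substr)
    next
      case False
      then show ?thesis using open_block by (rule_tac periodic_substr_mono) auto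
    qed
    moreover have "concat (Ps @ [?Y]) = take (Suc m * k) X"
      using cover s_le take_append_substr[of s "Suc m * k" X] by simp
    moreover have "length (Ps @ [?Y]) \<le> card (breaks k X \<inter> {..<Suc m * k})"
      using count count_Suc True by simp
    ultimately have "sweep_invariant k X (Suc m) (Ps @ [?Y]) (Suc m * k)"
      using pieces unfolding sweep_invariant_def by simp
    then show ?thesis by blast
  next
    case False
    have window: "periodic k (substr X (m * k) ((Suc m + 2) * k))"
      using False len unfolding end_eq by (simp add: breaks_def periodic_def)
    have "periodic k (substr X s ((Suc m + 2) * k))"
    proof (cases "s = m * k")
      case False
      show ?thesis
        by (rule periodic_substr_merge[OF open_block[OF False] window])
          (use s_le len in \<open>simp_all add: algebra_simps\<close>)
    qed (use window in simp)
    moreover have "length Ps \<le> card (breaks k X \<inter> {..<Suc m * k})"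
      using count count_Suc False by simp
    ultimately have "sweep_invariant k X (Suc m) Ps s"
      using cover pieces s_le len unfolding sweep_invariant_def end_eq by simp
    then show ?thesis by blast
  qed
qed

lemma sweep_invariant_exists:
  "0 < k \<Longrightarrow> m \<le> length X div k - 2 \<Longrightarrow> \<exists>Ps s. sweep_invariant k X m Ps s"
proof (induction m)
  case 0
  have "sweep_invariant k X 0 [] 0" by (simp add: sweep_invariant_def)
  then show ?case by blast
next
  case (Suc m)
  then have "m + 3 \<le> length X div k" by simp
  then have "(m + 3) * k \<le> length X" using Suc.prems(1) by (simp add: less_eq_div_iff_mult_less_eq)
  then have "m * k + 3 * k \<le> length X" by (simp add: algebra_simps)
  moreover obtain Ps s where "sweep_invariant k X m Ps s" using Suc by auto
  ultimately show ?case using sweep_invariant_Suc Suc.prems(1) by blast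
qed

lemma BP_upper:
  assumes k: "0 < k" shows "BP k X \<le> card (breaks k X) + 3"
proof -
  define M where "M = length X div k - 2"
  obtain Ps s where inv: "sweep_invariant k X M Ps s"
    using sweep_invariant_exists[OF k, of M X] by (auto simp: M_def)
  have "card (breaks k X \<inter> {..<M * k}) = card (breaks k X)"
    using breaks_subset_lessThan[OF k, of X] by (simp add: M_def Int_absorb2)
  then have count: "length Ps \<le> card (breaks k X)" using inv by (simp add: sweep_invariant_def)
  have short: "length X < (M + 3) * k"
    using k by (simp add: M_def flip: div_less_iff_less_mult)
  have "BP k (drop s X) \<le> 3"
  proof (cases "s = M * k")
    case True
    then show ?thesis using k short by (intro BP_le_of_length) (auto simp: algebra_simps)
  next
    case False
    let ?e = "(M + 2) * k"
    have "BP k (substr X s ?e) \<le> 1"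
      using inv False BP_le[of "[substr X s ?e]"] by (auto simp: sweep_invariant_def)
    moreover have "BP k (drop ?e X) \<le> 1"
      using k short by (intro BP_le_of_length) (auto simp: algebra_simps)
    moreover have "substr X s ?e @ drop ?e X = drop s X"
      using inv by (intro substr_append_drop) (auto simp: sweep_invariant_def)
    ultimately show ?thesis using BP_append_le[OF k, of "substr X s ?e" "drop ?e X"] by simp
  qed
  moreover have "BP k (take s X) \<le> length Ps"
    using inv BP_le[of Ps] by (simp add: sweep_invariant_def)
  ultimately show ?thesis
    using BP_append_le[OF k, of "take s X" "drop s X"] count by simp
qed

theorem lemma3p3:
  fixes X :: "'a list" and k :: nat
  assumes "k \<ge> 2"
  shows "real (card (breaks k X)) / 3 \<le> real (BP k X) \<and> BP k X \<le> card (breaks k X) + 3"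
proof -
  have k: "0 < k" using assms by simp
  show ?thesis using BP_lower[OF k, of X] BP_upper[OF k, of X] by simp
qed

end
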